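(* Let $\mathcal C$ be an irredundant 3-SAT formula. (a) If $u,v,w,a$ are distinct variables with $\bar u v w\in\mathcal C$, then at most one of the clauses $auv$, $avw$ belongs to $\mathcal C$. (b) If $u,a,b,c$ are distinct variables with $uab\in\mathcal C$ and $\bar u ac\in\mathcal C$, then $abc\notin\mathcal C$.
   Context: A clause is a conjunction of three literals on three distinct variables, written as juxtaposition (e.g. $\bar u vw=\bar u\wedge v\wedge w$); a formula is a nonempty set of clauses. $\mathcal C$ is irredundant if every $C\in\mathcal C$ has a witness: an assignment satisfying $C$ and no other clause of $\mathcal C$. *)

theory Defs
  imports Main
begin

type_synonym 'v lit = "'v \<times> bool"
type_synonym 'v clause = "'v lit set"

definition pos :: "'v \<Rightarrow> 'v lit" where "pos x = (x, True)"
definition neg :: "'v \<Rightarrow> 'v lit" where "neg x = (x, False)"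

definition is_clause :: "'v clause \<Rightarrow> bool" where
  "is_clause C \<longleftrightarrow> (\<exists>x y z p q r. distinct [x, y, z] \<and> C = {(x, p), (y, q), (z, r)})"

definition is_formula :: "'v clause set \<Rightarrow> bool" where
  "is_formula F \<longleftrightarrow> F \<noteq> {} \<and> (\<forall>C\<in>F. is_clause C)"

text \<open>An assignment satisfies a clause (a conjunction) iff it makes every literal true.\<close>
definition sat :: "('v \<Rightarrow> bool) \<Rightarrow> 'v clause \<Rightarrow> bool" where
  "sat \<sigma> C \<longleftrightarrow> (\<forall>(x, p)\<in>C. \<sigma> x = p)"

definition witness :: "'v clause set \<Rightarrow> 'v clause \<Rightarrow> ('v \<Rightarrow> bool) \<Rightarrow> bool" where
  "witness F C \<sigma> \<longleftrightarrow> sat \<sigma> C \<and> (\<forall>D\<in>F. D \<noteq> C \<longrightarrow> \<not> sat \<sigma> D)"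

definition irredundant :: "'v clause set \<Rightarrow> bool" where
  "irredundant F \<longleftrightarrow> (\<forall>C\<in>F. \<exists>\<sigma>. witness F C \<sigma>)"

end

theory Submission
  imports Defs
begin

(*
  Both parts of the theorem are instances of one observation about resolution.
  Suppose a formula contains the clauses  u A  and  (not u) B, and C is a clause that
  does not mention the variable u but contains every literal of A and of B.  Any
  assignment satisfying C satisfies A and B, and, depending on the value it gives to u,
  also satisfies  u A  or  (not u) B.  Both differ from C, so C has no witness and
  cannot belong to an irredundant formula.
  Part (a): with  ubar v w  and  a u v  in the formula, the clause  a v w  is excluded
  (A = {a, v}, B = {v, w}).  Part (b): with  u a b  and  ubar a c  in the formula,
  the clause  a b c  is excluded (A = {a, b}, B = {a, c}).
*)

lemma sat_subset: "A \<subseteq> C \<Longrightarrow> sat \<sigma> C \<Longrightarrow> sat \<sigma> A"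
  unfolding sat_def by blast

lemma sat_insert: "sat \<sigma> (insert (x, p) A) \<longleftrightarrow> \<sigma> x = p \<and> sat \<sigma> A"
  unfolding sat_def by auto

lemma irredundant_not_covered:
  assumes "irredundant F"
    and covered: "\<And>\<sigma>. sat \<sigma> C \<Longrightarrow> \<exists>D\<in>F. D \<noteq> C \<and> sat \<sigma> D"
  shows "C \<notin> F"
proof
  assume "C \<in> F"
  then obtain \<sigma> where "witness F C \<sigma>"
    using assms(1) unfolding irredundant_def by blast
  then show False
    using covered unfolding witness_def by blast
qed

lemma resolution_cover:
  assumes pos_clause: "insert (pos u) A \<in> F"
    and neg_clause: "insert (neg u) B \<in> F"
    and parts: "A \<union> B \<subseteq> C"
    and avoids_u: "\<And>p. (u, p) \<notin> C"
    and sat_C: "sat \<sigma> C"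
  shows "\<exists>D\<in>F. D \<noteq> C \<and> sat \<sigma> D"
proof -
  have "A \<subseteq> C" and "B \<subseteq> C"
    using parts by simp_all
  then have sat_A: "sat \<sigma> A" and sat_B: "sat \<sigma> B"
    using sat_C by (simp_all add: sat_subset)
  have pos_ne: "insert (pos u) A \<noteq> C"
    using avoids_u[of True] unfolding pos_def by blast
  have neg_ne: "insert (neg u) B \<noteq> C"
    using avoids_u[of False] unfolding neg_def by blast
  show ?thesis
  proof (cases "\<sigma> u")
    case True
    then have "sat \<sigma> (insert (pos u) A)"
      using sat_A by (simp add: pos_def sat_insert)
    with pos_clause pos_ne show ?thesis
      by (intro bexI conjI)
  next
    case False
    then have "sat \<sigma> (insert (neg u) B)"
      using sat_B by (simp add: neg_def sat_insert)
    with neg_clause neg_ne show ?thesis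
      by (intro bexI conjI)
  qed
qed

lemma resolution_obstruction:
  assumes "irredundant F"
    and "insert (pos u) A \<in> F" and "insert (neg u) B \<in> F"
    and "A \<union> B \<subseteq> C" and "\<And>p. (u, p) \<notin> C"
  shows "C \<notin> F"
  using assms(1) by (rule irredundant_not_covered) (rule resolution_cover[OF assms(2-5)])

theorem mainTheorem7:
  fixes F :: "'v clause set"
  assumes "is_formula F" and "irredundant F"
  shows "(\<forall>u v w a. distinct [u, v, w, a] \<and> {neg u, pos v, pos w} \<in> F \<longrightarrow>
            \<not> ({pos a, pos u, pos v} \<in> F \<and> {pos a, pos v, pos w} \<in> F)) \<and>
         (\<forall>u a b c. distinct [u, a, b, c] \<and> {pos u, pos a, pos b} \<in> F \<and> {neg u, pos a, pos c} \<in> F \<longrightarrow>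
            {pos a, pos b, pos c} \<notin> F)"
proof (intro conjI allI impI notI)
  fix u v w a
  assume d: "distinct [u, v, w, a] \<and> {neg u, pos v, pos w} \<in> F"
    and h: "{pos a, pos u, pos v} \<in> F \<and> {pos a, pos v, pos w} \<in> F"
  have pos_clause: "insert (pos u) {pos a, pos v} \<in> F"
    using h by (simp add: insert_commute)
  have neg_clause: "insert (neg u) {pos v, pos w} \<in> F"
    using d by simp
  have avoids_u: "\<And>p. (u, p) \<notin> {pos a, pos v, pos w}"
    using d by (simp add: pos_def)
  have "{pos a, pos v, pos w} \<notin> F"
    by (rule resolution_obstruction[OF assms(2) pos_clause neg_clause _ avoids_u]) blast
  then show False
    using h by simp
next
  fix u a b c
  assume d: "distinct [u, a, b, c] \<and> {pos u, pos a, pos b} \<in> F \<and> {neg u, pos a, pos c} \<in> F"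
    and h: "{pos a, pos b, pos c} \<in> F"
  have pos_clause: "insert (pos u) {pos a, pos b} \<in> F"
    and neg_clause: "insert (neg u) {pos a, pos c} \<in> F"
    using d by simp_all
  have avoids_u: "\<And>p. (u, p) \<notin> {pos a, pos b, pos c}"
    using d by (simp add: pos_def)
  have "{pos a, pos b, pos c} \<notin> F"
    by (rule resolution_obstruction[OF assms(2) pos_clause neg_clause _ avoids_u]) blast
  then show False
    using h by simp
qed

end
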